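(* Let $A=\langle a\mid a^k=1\rangle$ be a cyclic group of order $k$, let $r$ be an integer with $1\le r<k$ and $\gcd(r,k)=1$, let $\varphi$ be the automorphism of $A$ given by $a\mapsto a^r$, let $m$ be the multiplicative order of $r$ modulo $k$, and let $n$ be a positive multiple of $m$. Let $G=A\langle c\rangle$ be any finite group containing $A$ and an element $c$ of order $n$ with $A\cap\langle c\rangle=\{1\}$ and $G=A\langle c\rangle$, such that the skew-morphism of $A$ determined by $c$ (namely the map $\psi:A\to A$ defined by $cx=\psi(x)c^{j}$ with $\psi(x)\in A$, $j\in\mathbb{Z}_n$) equals $\varphi$. Then $G$ has a presentation \[ G=\langle a,c\mid a^k=c^n=1,\ c^ma=ac^{mt},\ ca=a^rc^{1+ms}\rangle, \] where $s,t\in\mathbb{Z}_{n/m}$ satisfy: (a) $t^{r-1}\equiv1\pmod{n/m}$; (b) $s\sum_{i=1}^{k}t^{i-1}\equiv0\pmod{n/m}$; (c) $s\sum_{i=1}^{m}\big(\sum_{j=1}^{r}t^{j-1}\big)^{i-1}\equiv t-1\pmod{n/m}$.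
   Context: A skew-morphism of a finite group $A$ is a permutation $\varphi$ of $A$ with $\varphi(1_A)=1_A$ for which there is a function $\pi:A\to\mathbb{Z}_m$ ($m$ the order of $\varphi$) with $\varphi(xy)=\varphi(x)\varphi^{\pi(x)}(y)$ for all $x,y\in A$. If $G=A\langle c\rangle$ with $A\cap\langle c\rangle=\{1\}$ and $|c|=n$, then for each $x\in A$ there are unique $\psi(x)\in A$ and $j\in\mathbb{Z}_n$ with $cx=\psi(x)c^j$, and $\psi$ is a skew-morphism of $A$ (the skew-morphism determined by $c$). *)

theory Defs
  imports "HOL-Algebra.Algebra" "HOL-Number_Theory.Number_Theory"
begin

definition skew_of :: "('a, 'm) monoid_scheme \<Rightarrow> 'a set \<Rightarrow> 'a \<Rightarrow> 'a \<Rightarrow> 'a" where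
  "skew_of G A c x = (THE y. y \<in> A \<and> (\<exists>j::nat. c \<otimes>\<^bsub>G\<^esub> x = y \<otimes>\<^bsub>G\<^esub> (c [^]\<^bsub>G\<^esub> j)))"

definition rels :: "('b, 'n) monoid_scheme \<Rightarrow> 'b \<Rightarrow> 'b \<Rightarrow> nat \<Rightarrow> nat \<Rightarrow> nat \<Rightarrow> nat \<Rightarrow> nat \<Rightarrow> nat \<Rightarrow> bool" where
  "rels H x y k n m r s t \<longleftrightarrow>
     x [^]\<^bsub>H\<^esub> k = \<one>\<^bsub>H\<^esub> \<and> y [^]\<^bsub>H\<^esub> n = \<one>\<^bsub>H\<^esub> \<and>
     (y [^]\<^bsub>H\<^esub> m) \<otimes>\<^bsub>H\<^esub> x = x \<otimes>\<^bsub>H\<^esub> (y [^]\<^bsub>H\<^esub> (m * t)) \<and>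
     y \<otimes>\<^bsub>H\<^esub> x = (x [^]\<^bsub>H\<^esub> r) \<otimes>\<^bsub>H\<^esub> (y [^]\<^bsub>H\<^esub> (1 + m * s))"

text \<open>G is presented by generators a, c and the relations above: a, c generate G,
  satisfy the relations, and G has the universal property of the presented group
  (any pair of elements of a group H satisfying the relations is the image of (a,c)
  under a homomorphism G \<rightarrow> H).  The target groups H range over the type 'b.\<close>
definition presented_by ::
  "('a, 'm) monoid_scheme \<Rightarrow> 'a \<Rightarrow> 'a \<Rightarrow> nat \<Rightarrow> nat \<Rightarrow> nat \<Rightarrow> nat \<Rightarrow> nat \<Rightarrow> nat \<Rightarrow> 'b itself \<Rightarrow> bool" where
  "presented_by G a c k n m r s t (_ :: 'b itself) \<longleftrightarrow>
     a \<in> carrier G \<and> c \<in> carrier G \<and> generate G {a, c} = carrier G \<and>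
     rels G a c k n m r s t \<and>
     (\<forall>(H :: 'b monoid) x y. group H \<and> x \<in> carrier H \<and> y \<in> carrier H \<and> rels H x y k n m r s t
        \<longrightarrow> (\<exists>h \<in> hom G H. h a = x \<and> h c = y))"

end

theory Submission
  imports Defs
begin

(* Every element of G = <a><c> is uniquely a^i c^l.  Comparing the two ways of computing
   c a^(i+1) shows that the exponent j in c a^i = a^(r i) c^j satisfies r^(j-1) = 1 (mod k),
   i.e. j = 1 (mod m); likewise c^m a = a c^(m t).  Reducing these exponents modulo n gives
   the two relations with s, t < n/m.  The relations alone let c^l be moved past a^i with an
   explicit exponent, so the product of normal forms is given by the same formula in G and in
   any group with elements x, y satisfying the relations; hence a^i c^l |-> x^i y^l is a
   well-defined homomorphism.  Conditions (a)-(c) follow from uniqueness of normal forms: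
   (a) from c^m a^k = c^m and the two expansions of c^(m+1) a, which give t^k = 1 and
   t^r = t (mod n/m); (b) from c a^k = c; (c) from expanding c^m a with the general formula. *)

context group begin

lemma pow_eq_pow_iff_cong:
  assumes "x \<in> carrier G"
  shows "x [^] (i::nat) = x [^] (j::nat) \<longleftrightarrow> [i = j] (mod ord x)"
proof -
  have "x [^] i = x [^] j \<longleftrightarrow> x [^] int i = x [^] int j"
    by (simp add: int_pow_int)
  also have "\<dots> \<longleftrightarrow> int (ord x) dvd int j - int i"
    using int_pow_eq[OF assms] by simp
  also have "\<dots> \<longleftrightarrow> [int i = int j] (mod int (ord x))"
    by (metis cong_iff_dvd_diff cong_sym)
  also have "\<dots> \<longleftrightarrow> [i = j] (mod ord x)"
    by (simp add: cong_int_iff)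
  finally show ?thesis .
qed

lemma pow_eq_pow_if_cong:
  assumes "x \<in> carrier G" and "x [^] k = \<one>" and "[i = j] (mod k)"
  shows "x [^] (i::nat) = x [^] (j::nat)"
  using assms pow_eq_id pow_eq_pow_iff_cong cong_dvd_modulus_nat by blast

lemma factors_unique_if_trivial_inter:
  assumes "subgroup A G" and "subgroup C G" and "A \<inter> C = {\<one>}"
    and "p \<in> A" "p' \<in> A" "q \<in> C" "q' \<in> C" and "p \<otimes> q = p' \<otimes> q'"
  shows "p = p' \<and> q = q'"
proof -
  have closed: "p \<in> carrier G" "p' \<in> carrier G" "q \<in> carrier G" "q' \<in> carrier G"
    using assms subgroup.subset by blast+
  have "inv p' \<otimes> p = q' \<otimes> inv q"
    using closed \<open>p \<otimes> q = p' \<otimes> q'\<close>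
    by (metis inv_closed m_assoc m_closed inv_solve_left' inv_solve_right)
  moreover have "inv p' \<otimes> p \<in> A" and "q' \<otimes> inv q \<in> C"
    using assms subgroup.m_closed subgroup.m_inv_closed by metis+
  ultimately have "inv p' \<otimes> p = \<one>"
    using \<open>A \<inter> C = {\<one>}\<close> by auto
  then have "p = p'"
    using closed by (metis inv_closed inv_inv inv_equality)
  with closed \<open>p \<otimes> q = p' \<otimes> q'\<close> show ?thesis
    by (metis l_cancel)
qed

end

(* The exponent in y^l x^i = x^(r^l i) y^(commute_exp m r s t l i), see y_pow_mult_x_pow. *)
definition commute_exp :: "nat \<Rightarrow> nat \<Rightarrow> nat \<Rightarrow> nat \<Rightarrow> nat \<Rightarrow> nat \<Rightarrow> nat" where
  "commute_exp m r s t l i = l + m * s * (\<Sum>w<l. \<Sum>u<r ^ w * i. t ^ u)"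

lemma commute_exp_Suc:
  "commute_exp m r s t (Suc l) i = commute_exp m r s t 1 (r ^ l * i) + commute_exp m r s t l i"
  by (simp add: commute_exp_def algebra_simps)

lemma commute_exp_one_Suc:
  "commute_exp m r s t 1 (Suc i) = commute_exp m r s t 1 i + m * s * t ^ i"
  by (simp add: commute_exp_def algebra_simps)

locale commutation_rels = group G for G (structure) +
  fixes x y :: 'a and m r s t :: nat
  assumes x_closed [simp]: "x \<in> carrier G" and y_closed [simp]: "y \<in> carrier G"
    and rel_m: "y [^] m \<otimes> x = x \<otimes> y [^] (m * t)"
    and rel_1: "y \<otimes> x = x [^] r \<otimes> y [^] (1 + m * s)"
begin

lemma y_pow_m_mult_x: "y [^] (m * u) \<otimes> x = x \<otimes> y [^] (m * u * t)"
proof (induction u)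
  case (Suc u)
  have "y [^] (m * Suc u) \<otimes> x = y [^] m \<otimes> (y [^] (m * u) \<otimes> x)"
    by (simp add: m_assoc[symmetric] nat_pow_mult)
  also have "\<dots> = (x \<otimes> y [^] (m * t)) \<otimes> y [^] (m * u * t)"
    using Suc by (simp add: m_assoc[symmetric] rel_m)
  also have "\<dots> = x \<otimes> y [^] (m * Suc u * t)"
    by (simp add: m_assoc nat_pow_mult algebra_simps)
  finally show ?case .
qed simp

lemma y_pow_m_mult_x_pow: "y [^] (m * u) \<otimes> x [^] i = x [^] i \<otimes> y [^] (m * u * t ^ i)"
proof (induction i arbitrary: u)
  case (Suc i)
  have "y [^] (m * u) \<otimes> x [^] Suc i = (x [^] i \<otimes> y [^] (m * (u * t ^ i))) \<otimes> x"
    by (simp add: Suc m_assoc[symmetric] mult.assoc)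
  also have "\<dots> = x [^] Suc i \<otimes> y [^] (m * u * t ^ Suc i)"
    by (simp add: y_pow_m_mult_x m_assoc mult_ac)
  finally show ?case .
qed simp

lemma y_mult_x_pow: "y \<otimes> x [^] i = x [^] (r * i) \<otimes> y [^] commute_exp m r s t 1 i"
proof (induction i)
  case 0
  then show ?case by (simp add: commute_exp_def)
next
  case (Suc i)
  have y_Suc: "y [^] (1 + m * s) = y \<otimes> y [^] (m * s)"
    using nat_pow_Suc2[OF y_closed, of "m * s"] by simp
  have "y \<otimes> x [^] Suc i = (y \<otimes> x) \<otimes> x [^] i"
    by (simp only: nat_pow_Suc2 m_assoc nat_pow_closed x_closed y_closed)
  also have "\<dots> = x [^] r \<otimes> (y \<otimes> (y [^] (m * s) \<otimes> x [^] i))"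
    by (simp only: rel_1 y_Suc m_assoc nat_pow_closed m_closed x_closed y_closed)
  also have "\<dots> = x [^] r \<otimes> ((y \<otimes> x [^] i) \<otimes> y [^] (m * s * t ^ i))"
    using y_pow_m_mult_x_pow[of s i] by (simp add: m_assoc)
  also have "\<dots> = (x [^] r \<otimes> x [^] (r * i)) \<otimes>
      (y [^] commute_exp m r s t 1 i \<otimes> y [^] (m * s * t ^ i))"
    by (simp add: Suc m_assoc)
  also have "\<dots> = x [^] (r * Suc i) \<otimes> y [^] commute_exp m r s t 1 (Suc i)"
    by (simp only: nat_pow_mult x_closed y_closed commute_exp_one_Suc mult_Suc_right)
  finally show ?case .
qed

lemma y_pow_mult_x_pow: "y [^] l \<otimes> x [^] i = x [^] (r ^ l * i) \<otimes> y [^] commute_exp m r s t l i"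
proof (induction l arbitrary: i)
  case 0
  then show ?case by (simp add: commute_exp_def)
next
  case (Suc l)
  have "y [^] Suc l \<otimes> x [^] i = y \<otimes> (y [^] l \<otimes> x [^] i)"
    by (simp only: nat_pow_Suc2 m_assoc nat_pow_closed x_closed y_closed)
  also have "\<dots> = (y \<otimes> x [^] (r ^ l * i)) \<otimes> y [^] commute_exp m r s t l i"
    by (simp add: Suc m_assoc)
  also have "\<dots> = x [^] (r ^ Suc l * i) \<otimes> y [^] commute_exp m r s t (Suc l) i"
    by (simp add: y_mult_x_pow commute_exp_Suc[of m r s t l i] m_assoc nat_pow_mult mult.assoc)
  finally show ?case .
qed

lemma normal_form_mult:
  "(x [^] i \<otimes> y [^] l) \<otimes> (x [^] i' \<otimes> y [^] l') =
     x [^] (i + r ^ l * i') \<otimes> y [^] (commute_exp m r s t l i' + l')"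
proof -
  have "(x [^] i \<otimes> y [^] l) \<otimes> (x [^] i' \<otimes> y [^] l') =
      x [^] i \<otimes> ((y [^] l \<otimes> x [^] i') \<otimes> y [^] l')"
    by (simp add: m_assoc)
  also have "\<dots> = (x [^] i \<otimes> x [^] (r ^ l * i')) \<otimes>
      (y [^] commute_exp m r s t l i' \<otimes> y [^] l')"
    by (simp add: y_pow_mult_x_pow m_assoc)
  finally show ?thesis
    by (simp add: nat_pow_mult)
qed

end

lemma cong_mult_left_modulus_iff:
  fixes m x y N :: nat
  assumes "m > 0"
  shows "[m * x = m * y] (mod m * N) \<longleftrightarrow> [x = y] (mod N)"
  using assms by (simp add: cong_def mult_mod_right[symmetric])

lemma sum_powers_mult_cong:
  fixes t r N q :: nat
  assumes "[t ^ r = t] (mod N)"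
  shows "[(\<Sum>u<r * q. t ^ u) = (\<Sum>v<q. t ^ v) * (\<Sum>w<r. t ^ w)] (mod N)"
proof -
  have block: "(\<Sum>u\<in>{v * r..<v * r + r}. t ^ u) = (\<Sum>w<r. t ^ (v * r) * t ^ w)" for v
    by (simp add: sum.atLeastLessThan_shift_0 atLeast0LessThan power_add)
  have "(\<Sum>u<r * q. t ^ u) = (\<Sum>v<q. \<Sum>w<r. t ^ (v * r) * t ^ w)"
    using sum.nat_group[of "\<lambda>u. t ^ u" r q] by (simp add: block mult.commute)
  also have "[\<dots> = (\<Sum>v<q. \<Sum>w<r. t ^ v * t ^ w)] (mod N)"
    using cong_pow[OF assms] by (intro cong_sum cong_mult cong_refl) (simp add: power_mult[symmetric] mult.commute)
  also have "(\<Sum>v<q. \<Sum>w<r. t ^ v * t ^ w) = (\<Sum>v<q. t ^ v) * (\<Sum>w<r. t ^ w)"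
    by (simp add: sum_product)
  finally show ?thesis .
qed

lemma sum_powers_pow_cong:
  fixes t r N w :: nat
  assumes "[t ^ r = t] (mod N)"
  shows "[(\<Sum>u<r ^ w. t ^ u) = (\<Sum>u<r. t ^ u) ^ w] (mod N)"
proof (induction w)
  case (Suc w)
  have "[(\<Sum>u<r * r ^ w. t ^ u) = (\<Sum>u<r ^ w. t ^ u) * (\<Sum>u<r. t ^ u)] (mod N)"
    by (rule sum_powers_mult_cong[OF assms])
  also have "[(\<Sum>u<r ^ w. t ^ u) * (\<Sum>u<r. t ^ u) = (\<Sum>u<r. t ^ u) ^ w * (\<Sum>u<r. t ^ u)] (mod N)"
    using Suc by (intro cong_mult cong_refl)
  finally show ?case
    by (simp add: mult.commute)
qed simp

lemma pow_pred_cong_one: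
  fixes t r k N :: nat
  assumes "[t ^ k = 1] (mod N)" and "[t ^ r = t] (mod N)" and "k \<ge> 1" and "r \<ge> 1"
  shows "[t ^ (r - 1) = 1] (mod N)"
proof -
  have "[t ^ (r - 1) = t ^ (r - 1) * t ^ k] (mod N)"
    using cong_scalar_left[OF assms(1), of "t ^ (r - 1)"] by (simp add: cong_sym_eq)
  also have "t ^ (r - 1) * t ^ k = t ^ r * t ^ (k - 1)"
    using assms(3,4) by (simp add: power_add[symmetric])
  also have "[t ^ r * t ^ (k - 1) = t * t ^ (k - 1)] (mod N)"
    using assms(2) by (intro cong_mult cong_refl)
  also have "t * t ^ (k - 1) = t ^ k"
    using assms(3) by (simp add: power_eq_if)
  finally show ?thesis
    using assms(1) by (rule cong_trans)
qed

locale cyclic_skew_product = group G for G (structure) +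
  fixes a c :: 'a and k r n :: nat
  assumes finite_carrier: "finite (carrier G)"
    and a_closed [simp]: "a \<in> carrier G" and c_closed [simp]: "c \<in> carrier G"
    and ord_a: "ord a = k" and ord_c: "ord c = n"
    and r_pos: "1 \<le> r" and r_less_k: "r < k" and coprime_r_k: "coprime r k"
    and n_pos: "n > 0" and ord_r_dvd_n: "Pocklington.ord k r dvd n"
    and trivial_inter: "generate G {a} \<inter> generate G {c} = {\<one>}"
    and carrier_eq: "carrier G = generate G {a} <#> generate G {c}"
    and skew_of_a_pow: "\<forall>i::nat. skew_of G (generate G {a}) c (a [^] i) = a [^] (r * i)"
begin

abbreviation m :: nat where "m \<equiv> Pocklington.ord k r"

abbreviation N :: nat where "N \<equiv> n div m"

lemma m_pos: "m > 0"
  using coprime_r_k Pocklington.ord_eq_0[of k r] by (simp add: coprime_commute)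

lemma a_pow_k [simp]: "a [^] k = \<one>"
  using ord_a pow_ord_eq_1[OF a_closed] by simp

lemma c_pow_n [simp]: "c [^] n = \<one>"
  using ord_c pow_ord_eq_1[OF c_closed] by simp

lemma m_mult_N: "m * N = n"
  using ord_r_dvd_n by simp

lemma N_pos: "N > 0"
  using m_mult_N n_pos by (cases N) auto

lemma generate_a_eq: "generate G {a} = {a [^] i | i::nat. True}"
  using generate_pow_on_finite_carrier[OF finite_carrier a_closed] by simp

lemma generate_c_eq: "generate G {c} = {c [^] i | i::nat. True}"
  using generate_pow_on_finite_carrier[OF finite_carrier c_closed] by simp

lemma normal_form_exists:
  assumes "z \<in> carrier G"
  obtains i l :: nat where "z = a [^] i \<otimes> c [^] l"
  using assms carrier_eq unfolding generate_a_eq generate_c_eq set_mult_def by blast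

lemma normal_form_unique:
  assumes "a [^] i \<otimes> c [^] l = a [^] i' \<otimes> c [^] l'"
  shows "a [^] (i::nat) = a [^] (i'::nat) \<and> c [^] (l::nat) = c [^] (l'::nat)"
proof -
  have "a [^] i \<in> generate G {a}" "a [^] i' \<in> generate G {a}"
    and "c [^] l \<in> generate G {c}" "c [^] l' \<in> generate G {c}"
    unfolding generate_a_eq generate_c_eq by blast+
  then show ?thesis
    using factors_unique_if_trivial_inter[OF generate_is_subgroup generate_is_subgroup trivial_inter]
      assms by simp
qed

lemma a_pow_eq_iff: "a [^] i = a [^] j \<longleftrightarrow> [i = j] (mod k)"
  using pow_eq_pow_iff_cong[OF a_closed] ord_a by simp

lemma c_pow_eq_iff: "c [^] i = c [^] j \<longleftrightarrow> [i = j] (mod n)"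
  using pow_eq_pow_iff_cong[OF c_closed] ord_c by simp

lemma c_pow_add_m_mult_eq_iff:
  "c [^] (l + m * i) = c [^] (l + m * j) \<longleftrightarrow> [i = j] (mod N)"
  using cong_mult_left_modulus_iff[OF m_pos, of i j N]
  by (simp add: c_pow_eq_iff m_mult_N cong_add_lcancel_nat)

lemma c_pow_exp_mod: "c [^] (l + m * q) = c [^] (l + m * (q mod N))"
  by (simp add: c_pow_add_m_mult_eq_iff cong_def)

lemma c_mult_a_pow: "\<exists>j::nat. c \<otimes> a [^] i = a [^] (r * i) \<otimes> c [^] j"
proof -
  obtain i' l :: nat where decomp: "c \<otimes> a [^] i = a [^] i' \<otimes> c [^] l"
    by (meson normal_form_exists m_closed nat_pow_closed a_closed c_closed)
  have "skew_of G (generate G {a}) c (a [^] i) = a [^] i'"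
    unfolding skew_of_def
  proof (rule the_equality)
    show "a [^] i' \<in> generate G {a} \<and> (\<exists>j::nat. c \<otimes> a [^] i = a [^] i' \<otimes> c [^] j)"
      using decomp generate_a_eq by blast
  next
    fix y assume "y \<in> generate G {a} \<and> (\<exists>j::nat. c \<otimes> a [^] i = y \<otimes> c [^] j)"
    then obtain i'' j :: nat where "y = a [^] i''" and "a [^] i'' \<otimes> c [^] j = a [^] i' \<otimes> c [^] l"
      using decomp unfolding generate_a_eq by auto
    then show "y = a [^] i'"
      using normal_form_unique by blast
  qed
  then show ?thesis
    using decomp skew_of_a_pow by metis
qed

lemma c_pow_mult_a_pow: "\<exists>e::nat. c [^] l \<otimes> a [^] i = a [^] (r ^ l * i) \<otimes> c [^] e"
proof (induction l arbitrary: i)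
  case 0
  show ?case
    by (rule exI[of _ 0]) simp
next
  case (Suc l)
  obtain e :: nat where e: "c [^] l \<otimes> a [^] (r * i) = a [^] (r ^ l * (r * i)) \<otimes> c [^] e"
    using Suc by blast
  obtain j :: nat where j: "c \<otimes> a [^] i = a [^] (r * i) \<otimes> c [^] j"
    using c_mult_a_pow by blast
  have "c [^] Suc l \<otimes> a [^] i = (c [^] l \<otimes> a [^] (r * i)) \<otimes> c [^] j"
    by (simp add: j m_assoc)
  also have "\<dots> = a [^] (r ^ l * (r * i)) \<otimes> c [^] (e + j)"
    by (simp add: e m_assoc nat_pow_mult)
  also have "r ^ l * (r * i) = r ^ Suc l * i"
    by simp
  finally show ?case by blast
qed

(* Comparing the two expansions of c a^(i+1) gives r^J = r (mod k); the representative
   J = j + n of the exponent is taken >= 1 so that this cancels to r^(J-1) = 1 (mod k). *)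

lemma c_mult_a_pow_exp_cong: "\<exists>q::nat. c \<otimes> a [^] i = a [^] (r * i) \<otimes> c [^] (1 + m * q)"
proof -
  obtain j :: nat where j: "c \<otimes> a [^] i = a [^] (r * i) \<otimes> c [^] j"
    using c_mult_a_pow by blast
  define J where "J = j + n"
  have "J \<ge> 1"
    using n_pos unfolding J_def by simp
  have "c [^] J = c [^] j"
    unfolding J_def by (simp add: c_pow_eq_iff cong_def)
  with j have J: "c \<otimes> a [^] i = a [^] (r * i) \<otimes> c [^] J"
    by simp
  obtain e :: nat where e: "c [^] J \<otimes> a = a [^] (r ^ J) \<otimes> c [^] e"
    using c_pow_mult_a_pow[of J 1] by auto
  obtain j' :: nat where j': "c \<otimes> a [^] Suc i = a [^] (r * Suc i) \<otimes> c [^] j'"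
    using c_mult_a_pow by blast
  have "c \<otimes> a [^] Suc i = a [^] (r * i) \<otimes> (c [^] J \<otimes> a)"
    using J by (simp add: m_assoc[symmetric])
  also have "\<dots> = a [^] (r * i + r ^ J) \<otimes> c [^] e"
    by (simp add: e m_assoc[symmetric] nat_pow_mult)
  finally have "a [^] (r * i + r ^ J) = a [^] (r * i + r)"
    using j' normal_form_unique by (metis mult_Suc_right add.commute)
  moreover have "r ^ J = r ^ (J - 1) * r"
    using \<open>J \<ge> 1\<close> by (simp add: power_minus_mult[symmetric])
  ultimately have "[r ^ (J - 1) * r = 1 * r] (mod k)"
    by (simp add: a_pow_eq_iff cong_add_lcancel_nat)
  then have "[r ^ (J - 1) = 1] (mod k)"
    using cong_mult_rcancel_nat coprime_r_k by blast
  then obtain q where "J - 1 = m * q"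
    using ord_divides by blast
  then show ?thesis
    using J \<open>J \<ge> 1\<close> by (metis le_add_diff_inverse)
qed

lemma c_pow_mult_a_pow_exp_cong:
  "\<exists>q::nat. c [^] l \<otimes> a [^] i = a [^] (r ^ l * i) \<otimes> c [^] (l + m * q)"
proof (induction l arbitrary: i)
  case 0
  show ?case
    by (rule exI[of _ 0]) simp
next
  case (Suc l)
  obtain e :: nat where e: "c [^] l \<otimes> a [^] (r * i) = a [^] (r ^ l * (r * i)) \<otimes> c [^] (l + m * e)"
    using Suc by blast
  obtain j :: nat where j: "c \<otimes> a [^] i = a [^] (r * i) \<otimes> c [^] (1 + m * j)"
    using c_mult_a_pow_exp_cong by blast
  have "c [^] Suc l \<otimes> a [^] i = (c [^] l \<otimes> a [^] (r * i)) \<otimes> c [^] (1 + m * j)"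
    by (simp add: j m_assoc)
  also have "\<dots> = a [^] (r ^ l * (r * i)) \<otimes> c [^] ((l + m * e) + (1 + m * j))"
    by (simp only: e m_assoc nat_pow_mult nat_pow_closed a_closed c_closed)
  also have "(l + m * e) + (1 + m * j) = Suc l + m * (e + j)"
    by (simp add: algebra_simps)
  also have "r ^ l * (r * i) = r ^ Suc l * i"
    by simp
  finally show ?case by blast
qed

lemma a_pow_r_pow_m [simp]: "a [^] (r ^ m) = a"
  using a_pow_eq_iff[of "r ^ m" 1] ord_works[of r k] by simp

lemma exists_rels: "\<exists>s t. s < N \<and> t < N \<and> rels G a c k n m r s t"
proof -
  obtain q1 :: nat where "c \<otimes> a = a [^] r \<otimes> c [^] (1 + m * q1)"
    using c_mult_a_pow_exp_cong[of 1] by auto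
  then have rel_1: "c \<otimes> a = a [^] r \<otimes> c [^] (1 + m * (q1 mod N))"
    by (simp only: c_pow_exp_mod[of 1 q1])
  obtain q2 :: nat where q2: "c [^] m \<otimes> a = a [^] (r ^ m) \<otimes> c [^] (m + m * q2)"
    using c_pow_mult_a_pow_exp_cong[of m 1] by auto
  then have rel_m: "c [^] m \<otimes> a = a \<otimes> c [^] (m * ((1 + q2) mod N))"
    using c_pow_exp_mod[of 0 "1 + q2"] by (simp add: algebra_simps)
  with rel_1 show ?thesis
    unfolding rels_def using N_pos
    by (intro exI[of _ "q1 mod N"] exI[of _ "(1 + q2) mod N"]) simp
qed

end

locale skew_presentation = cyclic_skew_product +
  fixes s t :: nat
  assumes rels_a_c: "rels G a c k n m r s t"

sublocale skew_presentation \<subseteq> commutation_rels G a c m r s t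
  using rels_a_c unfolding rels_def by unfold_locales auto

context skew_presentation
begin

lemma t_pow_k_cong: "[t ^ k = 1] (mod N)"
proof -
  have "c [^] (0 + m * t ^ k) = c [^] (0 + m * 1)"
    using y_pow_m_mult_x_pow[of 1 k] by simp
  then show ?thesis
    unfolding c_pow_add_m_mult_eq_iff .
qed

lemma t_pow_r_cong: "[t ^ r = t] (mod N)"
proof -
  have "c [^] m \<otimes> (c \<otimes> a) = (c [^] (m * 1) \<otimes> a [^] r) \<otimes> c [^] (1 + m * s)"
    by (simp add: rel_1 m_assoc)
  also have "\<dots> = a [^] r \<otimes> c [^] (m * 1 * t ^ r + (1 + m * s))"
    by (simp only: y_pow_m_mult_x_pow m_assoc nat_pow_mult nat_pow_closed a_closed c_closed)
  also have "m * 1 * t ^ r + (1 + m * s) = (1 + m * s) + m * t ^ r"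
    by simp
  finally have via_r: "c [^] m \<otimes> (c \<otimes> a) = a [^] r \<otimes> c [^] ((1 + m * s) + m * t ^ r)" .
  have "c [^] m \<otimes> (c \<otimes> a) = c \<otimes> (c [^] m \<otimes> a)"
    using nat_pow_comm[of c m 1] by (simp add: m_assoc[symmetric])
  also have "\<dots> = (c \<otimes> a) \<otimes> c [^] (m * t)"
    by (simp add: rel_m m_assoc)
  also have "\<dots> = a [^] r \<otimes> c [^] ((1 + m * s) + m * t)"
    by (simp only: rel_1 m_assoc nat_pow_mult nat_pow_closed a_closed c_closed)
  finally have "c [^] ((1 + m * s) + m * t ^ r) = c [^] ((1 + m * s) + m * t)"
    using via_r normal_form_unique by metis
  then show ?thesis
    unfolding c_pow_add_m_mult_eq_iff .
qed

lemma t_pow_r_minus_1_cong: "[t ^ (r - 1) = 1] (mod N)"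
  using pow_pred_cong_one[OF t_pow_k_cong t_pow_r_cong] r_pos r_less_k by simp

lemma s_mult_sum_pow_cong: "[s * (\<Sum>i=1..k. t ^ (i - 1)) = 0] (mod N)"
proof -
  have "a [^] (r * k) = \<one>"
    by (simp add: nat_pow_pow[symmetric] mult.commute)
  then have "c [^] (1 + m * 0) = c [^] (1 + m * (s * (\<Sum>u<k. t ^ u)))"
    using y_mult_x_pow[of k] by (simp add: commute_exp_def mult.assoc)
  then have "[s * (\<Sum>u<k. t ^ u) = 0] (mod N)"
    unfolding c_pow_add_m_mult_eq_iff by (rule cong_sym)
  then show ?thesis
    by (simp add: sum.atLeast1_atMost_eq)
qed

lemma s_mult_sum_sum_pow_cong:
  "[int s * (\<Sum>i=1..m. (\<Sum>j=1..r. int t ^ (j - 1)) ^ (i - 1)) = int t - 1] (mod int N)"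
proof -
  define R where "R = (\<Sum>u<r. t ^ u)"
  define W where "W = (\<Sum>w<m. \<Sum>u<r ^ w. t ^ u)"
  have "a \<otimes> c [^] (0 + m * (1 + s * W)) = c [^] m \<otimes> a"
    using y_pow_mult_x_pow[of m 1] by (simp add: commute_exp_def W_def algebra_simps)
  also have "\<dots> = a \<otimes> c [^] (0 + m * t)"
    by (simp add: rel_m)
  finally have "a \<otimes> c [^] (0 + m * (1 + s * W)) = a \<otimes> c [^] (0 + m * t)" .
  then have "[1 + s * W = t] (mod N)"
    using c_pow_add_m_mult_eq_iff l_cancel by (meson nat_pow_closed a_closed c_closed)
  moreover have "[W = (\<Sum>w<m. R ^ w)] (mod N)"
    unfolding W_def R_def by (intro cong_sum sum_powers_pow_cong t_pow_r_cong)
  then have "[1 + s * (\<Sum>w<m. R ^ w) = 1 + s * W] (mod N)"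
    by (intro cong_add cong_mult cong_refl) (rule cong_sym)
  ultimately have "[1 + s * (\<Sum>w<m. R ^ w) = t] (mod N)"
    using cong_trans by blast
  then have "[int (1 + s * (\<Sum>w<m. R ^ w)) = int t] (mod int N)"
    by (simp only: cong_int_iff)
  from cong_diff[OF this cong_refl[of 1]]
  have "[int s * (\<Sum>w<m. int R ^ w) = int t - 1] (mod int N)"
    by simp
  then show ?thesis
    unfolding R_def by (simp add: sum.atLeast1_atMost_eq)
qed

lemma generate_a_c_eq_carrier: "generate G {a, c} = carrier G"
proof
  show "generate G {a, c} \<subseteq> carrier G"
    by (intro generate_incl) auto
next
  show "carrier G \<subseteq> generate G {a, c}"
  proof
    fix z assume "z \<in> carrier G"
    then obtain i l :: nat where z: "z = a [^] i \<otimes> c [^] l"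
      by (rule normal_form_exists)
    have "generate G {a} \<subseteq> generate G {a, c}" and "generate G {c} \<subseteq> generate G {a, c}"
      by (intro mono_generate; auto)+
    then have "a [^] i \<in> generate G {a, c}" and "c [^] l \<in> generate G {a, c}"
      unfolding generate_a_eq generate_c_eq by auto
    then show "z \<in> generate G {a, c}"
      unfolding z by (rule generate.eng)
  qed
qed

lemma exists_hom_to_rels:
  assumes "group H" and "x \<in> carrier H" and "y \<in> carrier H" and "rels H x y k n m r s t"
  shows "\<exists>h \<in> hom G H. h a = x \<and> h c = y"
proof -
  interpret H: commutation_rels H x y m r s t
    using assms unfolding rels_def commutation_rels_def commutation_rels_axioms_def by auto
  have "x [^]\<^bsub>H\<^esub> k = \<one>\<^bsub>H\<^esub>" and "y [^]\<^bsub>H\<^esub> n = \<one>\<^bsub>H\<^esub>"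
    using assms(4) unfolding rels_def by auto
  then have well_defined: "x [^]\<^bsub>H\<^esub> i \<otimes>\<^bsub>H\<^esub> y [^]\<^bsub>H\<^esub> l =
      x [^]\<^bsub>H\<^esub> i' \<otimes>\<^bsub>H\<^esub> y [^]\<^bsub>H\<^esub> l'"
    if "a [^] i \<otimes> c [^] l = a [^] i' \<otimes> c [^] l'" for i l i' l' :: nat
    using normal_form_unique[OF that]
      H.pow_eq_pow_if_cong[OF H.x_closed] H.pow_eq_pow_if_cong[OF H.y_closed]
    unfolding a_pow_eq_iff c_pow_eq_iff by metis
  define h where "h z = (SOME w. \<exists>(i::nat) (l::nat). z = a [^] i \<otimes> c [^] l \<and>
      w = x [^]\<^bsub>H\<^esub> i \<otimes>\<^bsub>H\<^esub> y [^]\<^bsub>H\<^esub> l)" for z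
  have h_normal_form: "h (a [^] i \<otimes> c [^] l) = x [^]\<^bsub>H\<^esub> i \<otimes>\<^bsub>H\<^esub> y [^]\<^bsub>H\<^esub> l"
    for i l :: nat
    unfolding h_def by (rule some_equality) (auto intro: well_defined)
  have "h \<in> hom G H"
  proof (rule homI)
    fix z assume "z \<in> carrier G"
    then obtain i l :: nat where "z = a [^] i \<otimes> c [^] l"
      by (rule normal_form_exists)
    then show "h z \<in> carrier H"
      by (simp add: h_normal_form)
  next
    fix z z' assume "z \<in> carrier G" and "z' \<in> carrier G"
    then obtain i l i' l' :: nat where "z = a [^] i \<otimes> c [^] l" and "z' = a [^] i' \<otimes> c [^] l'"
      by (metis normal_form_exists)
    then show "h (z \<otimes> z') = h z \<otimes>\<^bsub>H\<^esub> h z'"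
      by (simp add: normal_form_mult H.normal_form_mult h_normal_form)
  qed
  moreover have "h a = x" and "h c = y"
    using h_normal_form[of 1 0] h_normal_form[of 0 1] by simp_all
  ultimately show ?thesis
    by blast
qed

lemma presented_by_a_c: "presented_by G a c k n m r s t TYPE('h)"
  unfolding presented_by_def using generate_a_c_eq_carrier rels_a_c exists_hom_to_rels by auto

end

theorem theorem1p2:
  fixes G (structure) and a c :: 'a and k r n :: nat
  assumes "group G" and "finite (carrier G)"
    and "a \<in> carrier G" and "c \<in> carrier G"
    and "group.ord G a = k"
    and "1 \<le> r" and "r < k" and "coprime r k"
    and "n > 0" and "ord k r dvd n"
    and "group.ord G c = n"
    and "generate G {a} \<inter> generate G {c} = {\<one>}"
    and "carrier G = generate G {a} <#> generate G {c}"
    and "\<forall>i::nat. skew_of G (generate G {a}) c (a [^] i) = a [^] (r * i)"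
  shows "\<exists>s t :: nat. s < n div ord k r \<and> t < n div ord k r \<and>
     [t ^ (r - 1) = 1] (mod (n div ord k r)) \<and>
     [s * (\<Sum>i=1..k. t ^ (i - 1)) = 0] (mod (n div ord k r)) \<and>
     [int s * (\<Sum>i=1..ord k r. (\<Sum>j=1..r. int t ^ (j - 1)) ^ (i - 1)) = int t - 1]
        (mod int (n div ord k r)) \<and>
     presented_by G a c k n (ord k r) r s t TYPE('b)"
proof -
  have setting: "cyclic_skew_product G a c k r n"
    using assms by (simp add: cyclic_skew_product_def cyclic_skew_product_axioms_def)
  obtain s t where "s < n div ord k r" and "t < n div ord k r"
    and "rels G a c k n (ord k r) r s t"
    using cyclic_skew_product.exists_rels[OF setting] by blast
  with setting have presentation: "skew_presentation G a c k r n s t"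
    by (simp add: skew_presentation_def skew_presentation_axioms_def)
  show ?thesis
    using \<open>s < n div ord k r\<close> \<open>t < n div ord k r\<close>
      skew_presentation.t_pow_r_minus_1_cong[OF presentation]
      skew_presentation.s_mult_sum_pow_cong[OF presentation]
      skew_presentation.s_mult_sum_sum_pow_cong[OF presentation]
      skew_presentation.presented_by_a_c[OF presentation] by blast
qed

end
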